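(* Under conditions C1, C2a and C2b, for every $\lambda>0$ and $\theta\in\Theta$: $S(Y^*;\theta,\lambda)=0$ if and only if $\theta=\theta^*$.
   Context: Setting: $T>0$, $C\in\mathbb{R}^{d'\times d}$, $\Theta\subset\mathbb{R}^p$; for $\theta\in\Theta$, $A_\theta(t)\in\mathbb{R}^{d\times d}$, $r_\theta(t)\in\mathbb{R}^d$ continuous in $t$. $X_{\theta,x_0,u}$ solves $\dot x=A_\theta x+r_\theta+u$, $x(0)=x_0$; $X_{\theta,x_0}=X_{\theta,x_0,0}$. True parameter $\theta^*\in\Theta$, true initial condition $x_0^*$, true trajectory $X^*=X_{\theta^*,x_0^*}$, true output $Y^*=CX^*$. $S(Y;\theta,\lambda)=\inf_{x_0\in\mathbb{R}^d}\inf_{u\in L^2}\{x_0^TQx_0+\int_0^T(\|Y-CX_{\theta,x_0,u}\|_2^2+\lambda\|u\|_2^2)dt\}$ with $Q=0$. $\Phi_\theta$ is the resolvent of $\dot x=A_\theta x$, $O_\theta(T)=\int_0^T\Phi_\theta(t,0)^TC^TC\Phi_\theta(t,0)dt$. Conditions: C1: $\Theta$ compact, $\theta^*$ in its interior. C2a: $Q=0$ and $O_\theta(T)$ nonsingular for all $\theta\in\Theta$. C2b: for all $(\theta,x_0)\in\Theta\times\mathbb{R}^d$, $CX_{\theta,x_0}=CX_{\theta^*,x_0^*}$ implies $(\theta,x_0)=(\theta^*,x_0^* )$. *)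

theory Defs
  imports "HOL-Analysis.Analysis"
begin

definition L2_on :: "real \<Rightarrow> (real \<Rightarrow> real^'d) \<Rightarrow> bool" where
  "L2_on T u \<longleftrightarrow> u measurable_on {0..T} \<and> (\<lambda>t. (norm (u t))^2) integrable_on {0..T}"

definition traj :: "real \<Rightarrow> (real \<Rightarrow> real^'d^'d) \<Rightarrow> (real \<Rightarrow> real^'d)
    \<Rightarrow> real^'d \<Rightarrow> (real \<Rightarrow> real^'d) \<Rightarrow> real \<Rightarrow> real^'d" where
  "traj T A r x0 u = (THE x. (\<forall>t\<in>{0..T}. x t = x0 + integral {0..t} (\<lambda>s. A s *v x s + r s + u s))
                          \<and> (\<forall>t. t \<notin> {0..T} \<longrightarrow> x t = 0))"

definition resolvent0 :: "real \<Rightarrow> (real \<Rightarrow> real^'d^'d) \<Rightarrow> real \<Rightarrow> real^'d^'d" where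
  "resolvent0 T A = (THE P. (\<forall>t\<in>{0..T}. P t = mat 1 + integral {0..t} (\<lambda>s. A s ** P s))
                          \<and> (\<forall>t. t \<notin> {0..T} \<longrightarrow> P t = 0))"

definition obs_gram :: "real \<Rightarrow> real^'d^'o \<Rightarrow> (real \<Rightarrow> real^'d^'d) \<Rightarrow> real^'d^'d" where
  "obs_gram T C A = integral {0..T}
     (\<lambda>t. transpose (resolvent0 T A t) ** transpose C ** C ** resolvent0 T A t)"

definition S_cost :: "real \<Rightarrow> real^'d^'o \<Rightarrow> real^'d^'d \<Rightarrow> ('p \<Rightarrow> real \<Rightarrow> real^'d^'d)
    \<Rightarrow> ('p \<Rightarrow> real \<Rightarrow> real^'d) \<Rightarrow> (real \<Rightarrow> real^'o) \<Rightarrow> 'p \<Rightarrow> real \<Rightarrow> real" where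
  "S_cost T C Q A r Y \<theta> lam = Inf {x0 \<bullet> (Q *v x0)
       + integral {0..T} (\<lambda>t. (norm (Y t - C *v traj T (A \<theta>) (r \<theta>) x0 u t))^2 + lam * (norm (u t))^2)
     | x0 u. L2_on T u}"

end

theory Submission
  imports Defs
begin

text \<open>If \<open>\<theta> = \<theta>*\<close>, the true initial condition with zero input gives cost \<open>0\<close>. Conversely, if
  \<open>S(Y*; \<theta>, \<lambda>) = 0\<close>, there are pairs \<open>(x\<^sub>0, u)\<close> whose output error and input energy are both
  arbitrarily small. By Gronwall's inequality the trajectory driven by \<open>u\<close> stays uniformly close to
  the free trajectory from \<open>x\<^sub>0\<close>, so outputs of free trajectories of \<open>\<theta>\<close> approximate \<open>Y*\<close>
  arbitrarily well in \<open>L\<^sup>2\<close>. These outputs form an affine image of \<open>\<real>\<^sup>d\<close>, which is closed in \<open>L\<^sup>2\<close>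
  (a minimising sequence orthogonal to the kernel is bounded, hence has a convergent subsequence),
  so \<open>Y*\<close> is exactly the output of a free trajectory of \<open>\<theta>\<close>, and identifiability (C2b) forces
  \<open>\<theta> = \<theta>*\<close>.\<close>

lemma norm_matrix_vector_mult_le:
  fixes A :: "real^'n^'m"
  shows "norm (A *v x) \<le> norm A * norm x"
proof -
  have row: "\<bar>(A *v x) $ i\<bar> \<le> norm (A $ i) * norm x" for i
    using Cauchy_Schwarz_ineq2[of "A $ i" x]
    by (simp add: matrix_vector_mult_def inner_vec_def mult.commute)
  have "(norm (A *v x))\<^sup>2 = (\<Sum>i\<in>UNIV. ((A *v x) $ i)\<^sup>2)"
    by (simp add: norm_vec_def L2_set_def sum_nonneg)
  also have "\<dots> \<le> (\<Sum>i\<in>UNIV. (norm (A $ i) * norm x)\<^sup>2)"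
    by (intro sum_mono) (metis abs_ge_zero power2_abs power_mono row)
  also have "\<dots> = (norm A * norm x)\<^sup>2"
    by (simp add: power_mult_distrib sum_distrib_right[symmetric] norm_vec_def L2_set_def sum_nonneg)
  finally show ?thesis
    using power2_le_imp_le by (simp add: zero_le_mult_iff)
qed

lemma continuous_on_matrix_vector_mult [continuous_intros]:
  fixes A :: "real \<Rightarrow> real^'n^'m"
  assumes "continuous_on S A" "continuous_on S y"
  shows "continuous_on S (\<lambda>s. A s *v y s)"
  unfolding matrix_vector_mult_def
  by (intro continuous_on_vec_lambda continuous_intros continuous_on_component assms)

lemma continuous_matrix_function_bounded:
  fixes A :: "real \<Rightarrow> real^'n^'m"
  assumes "continuous_on {0..T} A"
  obtains K where "K \<ge> 0" "\<And>s v. s \<in> {0..T} \<Longrightarrow> norm (A s *v v) \<le> K * norm v"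
proof -
  obtain K where "K > 0" "\<And>s. s \<in> {0..T} \<Longrightarrow> norm (A s) \<le> K"
    using compact_imp_bounded[OF compact_continuous_image[OF assms compact_Icc]]
    by (auto simp: bounded_pos)
  then show ?thesis
  proof (intro that[of K])
    fix s and v :: "real^'n" assume "K > 0" and "s \<in> {0..T}" and "\<And>s. s \<in> {0..T} \<Longrightarrow> norm (A s) \<le> K"
    then have "norm (A s) * norm v \<le> K * norm v" by (intro mult_right_mono) auto
    then show "norm (A s *v v) \<le> K * norm v" using norm_matrix_vector_mult_le order_trans by blast
  qed simp
qed

lemma integrable_on_initial_segment:
  fixes g :: "real \<Rightarrow> 'a::banach"
  shows "continuous_on {0..T} g \<Longrightarrow> t \<in> {0..T} \<Longrightarrow> g integrable_on {0..t}"
  by (rule integrable_continuous_interval) (auto elim: continuous_on_subset)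

lemma has_integral_exp_mult:
  fixes L t :: real
  assumes "L > 0" "t \<ge> 0"
  shows "((\<lambda>s. exp (L * s)) has_integral (exp (L * t) - 1) / L) {0..t}"
proof -
  have "((\<lambda>s. exp (L * s)) has_integral (exp (L * t) / L - exp (L * 0) / L)) {0..t}"
    using assms
    by (intro fundamental_theorem_of_calculus)
       (auto intro!: derivative_eq_intros simp: has_real_derivative_iff_has_vector_derivative[symmetric])
  then show ?thesis by (simp add: diff_divide_distrib)
qed

text \<open>Gronwall's inequality in a weak form: the maximum \<open>m\<close> of \<open>e\<^sup>-\<^sup>L\<^sup>s \<phi> s\<close> with
  \<open>L = 2K + 1\<close> satisfies \<open>m \<le> c + m/2\<close>.\<close>
lemma gronwall_exp_bound:
  fixes \<phi> :: "real \<Rightarrow> real"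
  assumes cont: "continuous_on {0..a} \<phi>" and nonneg: "\<And>t. t \<in> {0..a} \<Longrightarrow> 0 \<le> \<phi> t"
    and K: "K \<ge> 0" and c: "c \<ge> 0"
    and le: "\<And>t. t \<in> {0..a} \<Longrightarrow> \<phi> t \<le> c + K * integral {0..t} \<phi>"
    and t: "t \<in> {0..a}"
  shows "\<phi> t \<le> 2 * c * exp ((2*K+1) * a)"
proof -
  define L where "L = 2*K+1"
  have L: "L > 0" "K / L \<le> 1/2" using K by (auto simp: L_def field_simps)
  define \<psi> where "\<psi> s = exp (-(L * s)) * \<phi> s" for s
  have "continuous_on {0..a} \<psi>" unfolding \<psi>_def by (intro continuous_intros cont)
  then obtain s0 where s0: "s0 \<in> {0..a}" and max: "\<And>s. s \<in> {0..a} \<Longrightarrow> \<psi> s \<le> \<psi> s0"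
    using continuous_attains_sup[of "{0..a}" \<psi>] t by fastforce
  define m where "m = \<psi> s0"
  have m0: "m \<ge> 0" using nonneg[OF s0] by (simp add: m_def \<psi>_def)
  have phi_le: "\<phi> s \<le> m * exp (L * s)" if "s \<in> {0..a}" for s
    using mult_right_mono[OF max[OF that], of "exp (L * s)"]
    by (simp add: m_def \<psi>_def exp_minus field_simps)
  have int_le: "integral {0..s} \<phi> \<le> m * exp (L * s) / L" if s: "s \<in> {0..a}" for s
  proof -
    have "integral {0..s} \<phi> \<le> integral {0..s} (\<lambda>v. m * exp (L * v))"
      using s phi_le
      by (intro integral_le integrable_on_initial_segment[OF cont] integrable_continuous_interval
          continuous_intros) auto
    also have "\<dots> = m * ((exp (L * s) - 1) / L)"
      using has_integral_exp_mult[OF L(1), of s] s by (simp add: integral_unique)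
    also have "\<dots> \<le> m * exp (L * s) / L" using m0 L by (simp add: divide_right_mono mult_left_mono)
    finally show ?thesis .
  qed
  have "\<phi> s0 \<le> c + K * (m * exp (L * s0) / L)"
    using le[OF s0] mult_left_mono[OF int_le[OF s0] K] by linarith
  then have "m \<le> exp (-(L * s0)) * (c + K * (m * exp (L * s0) / L))"
    by (simp add: m_def \<psi>_def)
  also have "\<dots> = exp (-(L * s0)) * c + (K/L) * m"
    by (simp add: field_simps exp_minus)
  also have "\<dots> \<le> c + (1/2) * m"
    using L s0 c m0 by (intro add_mono mult_left_le_one_le mult_right_mono) auto
  finally have "m \<le> 2*c" by simp
  then have "m * exp (L*t) \<le> 2*c * exp (L*t)" by (rule mult_right_mono) simp
  with phi_le[OF t] have "\<phi> t \<le> 2*c * exp (L*t)" by linarith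
  also have "\<dots> \<le> 2*c * exp (L*a)" using t L c by (auto intro!: mult_left_mono)
  finally show ?thesis by (simp add: L_def)
qed

lemma norm_add_squared_le:
  fixes p q :: "'a::real_normed_vector"
  shows "(norm (p + q))\<^sup>2 \<le> 2 * (norm p)\<^sup>2 + 2 * (norm q)\<^sup>2"
proof -
  have "(norm (p + q))\<^sup>2 \<le> (norm p + norm q)\<^sup>2" by (simp add: norm_triangle_ineq power_mono)
  also have "\<dots> \<le> 2 * (norm p)\<^sup>2 + 2 * (norm q)\<^sup>2"
    using sum_squares_bound[of "norm p" "norm q"] by (simp add: power2_eq_square algebra_simps)
  finally show ?thesis .
qed

lemma integral_norm_add_squared_le:
  fixes f g :: "real \<Rightarrow> 'a::real_normed_vector"
  assumes "continuous_on {0..T} f" "continuous_on {0..T} g"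
  shows "integral {0..T} (\<lambda>t. (norm (f t + g t))\<^sup>2)
           \<le> 2 * integral {0..T} (\<lambda>t. (norm (f t))\<^sup>2) + 2 * integral {0..T} (\<lambda>t. (norm (g t))\<^sup>2)"
proof -
  have "integral {0..T} (\<lambda>t. (norm (f t + g t))\<^sup>2)
          \<le> integral {0..T} (\<lambda>t. 2 * (norm (f t))\<^sup>2 + 2 * (norm (g t))\<^sup>2)"
    using assms norm_add_squared_le
    by (intro integral_le integrable_continuous_interval continuous_intros) auto
  also have "\<dots> = 2 * integral {0..T} (\<lambda>t. (norm (f t))\<^sup>2) + 2 * integral {0..T} (\<lambda>t. (norm (g t))\<^sup>2)"
    using assms
    by (subst integral_add) (auto intro!: integrable_continuous_interval continuous_intros)
  finally show ?thesis .
qed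

lemma continuous_square_integral_eq_0:
  fixes f :: "real \<Rightarrow> 'a::real_normed_vector"
  assumes "T > 0" "continuous_on {0..T} f" "integral {0..T} (\<lambda>t. (norm (f t))\<^sup>2) = 0"
    and t: "t \<in> {0..T}"
  shows "f t = 0"
proof -
  have "(norm (f t))\<^sup>2 = 0"
  proof (rule has_integral_0_cbox_imp_0[of 0 T "\<lambda>t. (norm (f t))\<^sup>2"])
    show "continuous_on (cbox 0 T) (\<lambda>t. (norm (f t))\<^sup>2)"
      using assms by (auto intro!: continuous_intros)
    show "((\<lambda>t. (norm (f t))\<^sup>2) has_integral 0) (cbox 0 T)"
    proof -
      have "(\<lambda>t. (norm (f t))\<^sup>2) integrable_on {0..T}"
        using assms by (intro integrable_continuous_interval continuous_intros)
      then show ?thesis using assms(3) by (simp add: has_integral_integral)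
    qed
  qed (use assms in \<open>auto simp: box_real\<close>)
  then show ?thesis by simp
qed

definition integral_solution ::
    "real \<Rightarrow> (real \<Rightarrow> real^'d^'d) \<Rightarrow> (real \<Rightarrow> real^'d) \<Rightarrow> real^'d \<Rightarrow> (real \<Rightarrow> real^'d) \<Rightarrow> bool" where
  "integral_solution T A f x0 x \<longleftrightarrow> (\<forall>t\<in>{0..T}. x t = x0 + integral {0..t} (\<lambda>s. A s *v x s + f s))"

lemma exp_weighted_integral_le:
  fixes A :: "real \<Rightarrow> real^'d^'d" and v :: "real \<Rightarrow> real^'d"
  assumes K: "K \<ge> 0" "\<And>s w. s \<in> {0..\<tau>} \<Longrightarrow> norm (A s *v w) \<le> K * norm w"
    and L: "L > 0" and \<tau>: "\<tau> \<ge> 0"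
    and int: "(\<lambda>s. exp (L * s) *\<^sub>R (A s *v v s)) integrable_on {0..\<tau>}"
    and v: "\<And>s. s \<in> {0..\<tau>} \<Longrightarrow> norm (v s) \<le> c"
  shows "norm (exp (-(L * \<tau>)) *\<^sub>R integral {0..\<tau>} (\<lambda>s. exp (L * s) *\<^sub>R (A s *v v s))) \<le> K / L * c"
proof -
  have "norm (v 0) \<le> c" using v \<tau> by simp
  then have c: "c \<ge> 0" using norm_ge_zero order_trans by blast
  define I where "I = integral {0..\<tau>} (\<lambda>s. exp (L * s) *\<^sub>R (A s *v v s))"
  have "norm (integral {0..\<tau>} (\<lambda>s. exp (L * s) *\<^sub>R (A s *v v s)))
          \<le> integral {0..\<tau>} (\<lambda>s. exp (L * s) * (K * c))"
  proof (rule integral_norm_bound_integral[OF int])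
    show "(\<lambda>s. exp (L * s) * (K * c)) integrable_on {0..\<tau>}"
      by (intro integrable_continuous_interval continuous_intros)
    fix s assume s: "s \<in> {0..\<tau>}"
    have "norm (A s *v v s) \<le> K * c"
      using K(2)[OF s, of "v s"] mult_left_mono[OF v[OF s] K(1)] by linarith
    then show "norm (exp (L * s) *\<^sub>R (A s *v v s)) \<le> exp (L * s) * (K * c)"
      by (simp add: mult_left_mono)
  qed
  also have "\<dots> = K * c * ((exp (L * \<tau>) - 1) / L)"
    using has_integral_exp_mult[OF L \<tau>] by (simp add: integral_unique integral_mult_left mult.commute)
  also have "\<dots> \<le> K * c * (exp (L * \<tau>) / L)"
    using K(1) L c by (intro mult_left_mono divide_right_mono) auto
  finally have I: "norm I \<le> K * c * (exp (L * \<tau>) / L)" unfolding I_def .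
  have "norm (exp (-(L * \<tau>)) *\<^sub>R I) \<le> exp (-(L * \<tau>)) * (K * c * (exp (L * \<tau>) / L))"
    using mult_left_mono[OF I, of "exp (-(L * \<tau>))"] by simp
  also have "\<dots> = K / L * c" by (simp add: exp_minus field_simps)
  finally show ?thesis unfolding I_def .
qed

text \<open>The Picard operator conjugated by the weight \<open>e\<^sup>L\<^sup>t\<close>: its fixed points \<open>y\<close> give the solutions
  \<open>x t = e\<^sup>L\<^sup>t y t\<close>, and for \<open>L = 2K + 1\<close> it is a \<open>1/2\<close>-contraction in the sup norm on all of \<open>[0, T]\<close>.\<close>
definition weighted_picard ::
    "(real \<Rightarrow> real^'d^'d) \<Rightarrow> (real \<Rightarrow> real^'d) \<Rightarrow> real^'d \<Rightarrow> real \<Rightarrow> (real \<Rightarrow> real^'d) \<Rightarrow> real \<Rightarrow> real^'d"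
  where "weighted_picard A f x0 L y \<tau> =
    exp (-(L * \<tau>)) *\<^sub>R (x0 + integral {0..\<tau>} f + integral {0..\<tau>} (\<lambda>s. exp (L * s) *\<^sub>R (A s *v y s)))"

lemma weighted_picard_continuous:
  fixes A :: "real \<Rightarrow> real^'d^'d" and f y :: "real \<Rightarrow> real^'d"
  assumes "continuous_on {0..T} A" "f integrable_on {0..T}" "continuous_on {0..T} y"
  shows "continuous_on {0..T} (weighted_picard A f x0 L y)"
  unfolding weighted_picard_def
  by (intro continuous_intros indefinite_integral_continuous_1 integrable_continuous_interval assms)

lemma weighted_picard_dist_le:
  fixes A :: "real \<Rightarrow> real^'d^'d" and y z :: "real \<Rightarrow> real^'d"
  assumes Ac: "continuous_on {0..T} A" and K: "K \<ge> 0" "\<And>s v. s \<in> {0..T} \<Longrightarrow> norm (A s *v v) \<le> K * norm v"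
    and L: "L > 0" and yc: "continuous_on {0..T} y" and zc: "continuous_on {0..T} z"
    and \<tau>: "\<tau> \<in> {0..T}" and c: "\<And>s. norm (y s - z s) \<le> c"
  shows "norm (weighted_picard A f x0 L y \<tau> - weighted_picard A f x0 L z \<tau>) \<le> K / L * c"
proof -
  have int: "(\<lambda>s. exp (L * s) *\<^sub>R (A s *v v s)) integrable_on {0..\<tau>}" if "continuous_on {0..T} v" for v
    by (intro integrable_on_initial_segment[OF _ \<tau>] continuous_intros Ac that)
  have "weighted_picard A f x0 L y \<tau> - weighted_picard A f x0 L z \<tau>
      = exp (-(L * \<tau>)) *\<^sub>R integral {0..\<tau>} (\<lambda>s. exp (L * s) *\<^sub>R (A s *v (y s - z s)))"
    using int[OF yc] int[OF zc]
    by (simp add: weighted_picard_def scaleR_diff_right[symmetric] integral_diff[symmetric]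
        matrix_vector_mult_diff_distrib)
  also have "norm \<dots> \<le> K / L * c"
  proof (rule exp_weighted_integral_le[OF K(1) _ L])
    show "norm (A s *v w) \<le> K * norm w" if "s \<in> {0..\<tau>}" for s w
      using K(2) \<tau> that by auto
    show "(\<lambda>s. exp (L * s) *\<^sub>R (A s *v (y s - z s))) integrable_on {0..\<tau>}"
      by (rule int) (intro continuous_intros yc zc)
  qed (use \<tau> c in auto)
  finally show ?thesis .
qed

lemma weighted_picard_fixed_point_solution:
  fixes A :: "real \<Rightarrow> real^'d^'d" and f y :: "real \<Rightarrow> real^'d"
  assumes Ac: "continuous_on {0..T} A" and fi: "f integrable_on {0..T}" and yc: "continuous_on {0..T} y"
    and fixed: "\<And>t. t \<in> {0..T} \<Longrightarrow> y t = weighted_picard A f x0 L y t"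
  shows "integral_solution T A f x0 (\<lambda>t. exp (L * t) *\<^sub>R y t)"
  unfolding integral_solution_def
proof
  fix t assume t: "t \<in> {0..T}"
  have "(\<lambda>s. A s *v (exp (L * s) *\<^sub>R y s)) integrable_on {0..t}"
    by (intro integrable_on_initial_segment[OF _ t] continuous_intros Ac yc)
  moreover have "f integrable_on {0..t}" using integrable_on_subinterval[OF fi] t by auto
  moreover have "exp (L * t) *\<^sub>R y t
      = x0 + integral {0..t} f + integral {0..t} (\<lambda>s. A s *v (exp (L * s) *\<^sub>R y s))"
    using fixed[OF t] by (simp add: weighted_picard_def exp_minus matrix_vector_mult_scaleR)
  ultimately show "exp (L * t) *\<^sub>R y t
      = x0 + integral {0..t} (\<lambda>s. A s *v (exp (L * s) *\<^sub>R y s) + f s)"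
    by (simp add: integral_add add.assoc add.commute)
qed

lemma integral_solution_exists:
  fixes A :: "real \<Rightarrow> real^'d^'d" and f :: "real \<Rightarrow> real^'d"
  assumes T: "T \<ge> 0" and Ac: "continuous_on {0..T} A" and fi: "f integrable_on {0..T}"
  shows "\<exists>x. continuous_on {0..T} x \<and> integral_solution T A f x0 x"
proof -
  obtain K where K: "K \<ge> 0" "\<And>s v. s \<in> {0..T} \<Longrightarrow> norm (A s *v v) \<le> K * norm v"
    using continuous_matrix_function_bounded[OF Ac] by blast
  define L where "L = 2*K+1"
  have L: "L > 0" "K / L \<le> 1/2" using K by (auto simp: L_def field_simps)
  let ?P = "weighted_picard A f x0 L"
  have clamp: "clamp 0 T t \<in> {0..T}" for t
    using clamp_in_interval[of 0 T t] T by (simp add: cbox_interval)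
  have "\<exists>G. \<forall>t. apply_bcontfun G t = ?P (apply_bcontfun y) (clamp 0 T t)" for y :: "real \<Rightarrow>\<^sub>C (real^'d)"
    using continuous_on_cbox_bcontfunE[of 0 T "?P (apply_bcontfun y)"]
      weighted_picard_continuous[OF Ac fi continuous_on_apply_bcontfun] by (metis cbox_interval)
  then obtain G where G: "\<And>y t. apply_bcontfun (G y) t = ?P (apply_bcontfun y) (clamp 0 T t)"
    by metis
  have "dist (G y) (G z) \<le> 1/2 * dist y z" for y z
  proof (rule dist_bound)
    fix t
    have "norm (y s - z s) \<le> dist y z" for s using dist_bounded[of y s z] by (simp add: dist_norm)
    then have "norm (G y t - G z t) \<le> K / L * dist y z"
      unfolding G by (intro weighted_picard_dist_le[OF Ac K L(1)] continuous_on_apply_bcontfun clamp)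
    also have "\<dots> \<le> 1/2 * dist y z" by (rule mult_right_mono[OF L(2) zero_le_dist])
    finally show "dist (G y t) (G z t) \<le> 1/2 * dist y z" by (simp add: dist_norm)
  qed
  then obtain y where y: "G y = y" using banach_fix_type[of "1/2" G] by auto
  have "integral_solution T A f x0 (\<lambda>t. exp (L * t) *\<^sub>R apply_bcontfun y t)"
    using G[of y] y
    by (intro weighted_picard_fixed_point_solution[OF Ac fi continuous_on_apply_bcontfun])
       (simp add: clamp_cancel_cbox cbox_interval)
  moreover have "continuous_on {0..T} (\<lambda>t. exp (L * t) *\<^sub>R apply_bcontfun y t)"
    by (intro continuous_intros continuous_on_apply_bcontfun)
  ultimately show ?thesis by blast
qed

lemma integrand_integrable_on_initial_segment:
  fixes A :: "real \<Rightarrow> real^'d^'d" and x f :: "real \<Rightarrow> real^'d"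
  assumes "continuous_on {0..T} A" "continuous_on {0..T} x" "f integrable_on {0..T}" "t \<in> {0..T}"
  shows "(\<lambda>s. A s *v x s + f s) integrable_on {0..t}"
proof (rule integrable_add)
  show "(\<lambda>s. A s *v x s) integrable_on {0..t}"
    using assms by (intro integrable_on_initial_segment[of T] continuous_intros) auto
  show "f integrable_on {0..t}" using assms integrable_on_subinterval[of f "{0..T}"] by auto
qed

lemma integral_solution_eq_on_initial_segment:
  fixes A :: "real \<Rightarrow> real^'d^'d" and f :: "real \<Rightarrow> real^'d"
  assumes Ac: "continuous_on {0..T} A" and fi: "f integrable_on {0..T}"
    and sx: "integral_solution T A f x0 x" and sy: "integral_solution T A f x0 y"
    and yc: "continuous_on {0..T} y"
    and t1: "t1 \<le> T" and xi: "(\<lambda>s. A s *v x s + f s) integrable_on {0..t1}"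
    and s: "s \<in> {0..t1}"
  shows "x s = y s"
proof -
  obtain K where K: "K \<ge> 0" "\<And>s v. s \<in> {0..T} \<Longrightarrow> norm (A s *v v) \<le> K * norm v"
    using continuous_matrix_function_bounded[OF Ac] by blast
  have sub: "{0..t1} \<subseteq> {0..T}" using t1 by auto
  have yi: "(\<lambda>s. A s *v y s + f s) integrable_on {0..t}" if "t \<in> {0..t1}" for t
    using that sub by (intro integrand_integrable_on_initial_segment[OF Ac yc fi]) auto
  have xi': "(\<lambda>s. A s *v x s + f s) integrable_on {0..t}" if "t \<in> {0..t1}" for t
    using xi that integrable_on_subinterval by fastforce
  have diff: "x t - y t = integral {0..t} (\<lambda>v. A v *v (x v - y v))"
    and diff_int: "(\<lambda>v. A v *v (x v - y v)) integrable_on {0..t}" if t: "t \<in> {0..t1}" for t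
  proof -
    show "(\<lambda>v. A v *v (x v - y v)) integrable_on {0..t}"
      using integrable_diff[OF xi'[OF t] yi[OF t]] by (simp add: matrix_vector_mult_diff_distrib)
    have "x t - y t = integral {0..t} (\<lambda>s. A s *v x s + f s) - integral {0..t} (\<lambda>s. A s *v y s + f s)"
      using sx sy t sub by (auto simp: integral_solution_def)
    also have "\<dots> = integral {0..t} (\<lambda>v. A v *v (x v - y v))"
      using integral_diff[OF xi'[OF t] yi[OF t]] by (simp add: matrix_vector_mult_diff_distrib)
    finally show "x t - y t = integral {0..t} (\<lambda>v. A v *v (x v - y v))" .
  qed
  have xc: "continuous_on {0..t1} x"
  proof (rule continuous_on_eq)
    show "continuous_on {0..t1} (\<lambda>s. x0 + integral {0..s} (\<lambda>s. A s *v x s + f s))"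
      by (intro continuous_intros indefinite_integral_continuous_1 xi)
    show "x0 + integral {0..s} (\<lambda>s. A s *v x s + f s) = x s" if "s \<in> {0..t1}" for s
      using sx that sub by (auto simp: integral_solution_def)
  qed
  have "norm (x s - y s) \<le> 2 * 0 * exp ((2*K+1)*t1)"
  proof (rule gronwall_exp_bound[OF _ _ K(1) order_refl _ s])
    show "continuous_on {0..t1} (\<lambda>s. norm (x s - y s))"
      by (intro continuous_intros xc continuous_on_subset[OF yc sub])
    fix t assume t: "t \<in> {0..t1}"
    have "norm (integral {0..t} (\<lambda>v. A v *v (x v - y v))) \<le> integral {0..t} (\<lambda>v. K * norm (x v - y v))"
      using t sub K(2)
      by (intro integral_norm_bound_integral diff_int integrable_on_initial_segment[of t1]
          continuous_intros xc continuous_on_subset[OF yc sub]) auto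
    then show "norm (x t - y t) \<le> 0 + K * integral {0..t} (\<lambda>s. norm (x s - y s))"
      by (simp add: diff[OF t])
  qed simp
  then show ?thesis by simp
qed

text \<open>A solution in the sense of the definition need not be continuous, nor its integrand
  integrable (the integral of a non-integrable function is \<open>0\<close>). The supremum of the times up to
  which the integrand is integrable is nevertheless \<open>T\<close>: beyond it the solution would be constant.\<close>
lemma integral_solution_unique:
  fixes A :: "real \<Rightarrow> real^'d^'d" and f :: "real \<Rightarrow> real^'d"
  assumes T: "T \<ge> 0" and Ac: "continuous_on {0..T} A" and fi: "f integrable_on {0..T}"
    and sx: "integral_solution T A f x0 x" and sy: "integral_solution T A f x0 y"
    and yc: "continuous_on {0..T} y" and t: "t \<in> {0..T}"
  shows "x t = y t"
proof -
  define gx where "gx s = A s *v x s + f s" for s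
  note eq_on = integral_solution_eq_on_initial_segment[OF Ac fi sx sy yc, folded gx_def]
  define S where "S = {t\<in>{0..T}. gx integrable_on {0..t}}"
  have S0: "0 \<in> S" using T integrable_on_refl[of gx 0] by (simp add: S_def cbox_interval)
  have Sb: "bdd_above S" unfolding S_def by (rule bdd_aboveI[of _ T]) auto
  define t0 where "t0 = Sup S"
  have t0: "0 \<le> t0" "t0 \<le> T"
    unfolding t0_def by (rule cSup_upper[OF S0 Sb], rule cSup_least) (use S0 in \<open>auto simp: S_def\<close>)
  have below: "gx s = A s *v y s + f s" if "s \<in> {0..t0} - {t0}" for s
  proof -
    have "\<exists>t'\<in>S. s < t'" using that less_cSup_iff[of S s] S0 Sb unfolding t0_def by auto
    then obtain t' where "t' \<in> S" "s < t'" by blast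
    then have "t' \<le> T" "gx integrable_on {0..t'}" "s \<in> {0..t'}" using that by (auto simp: S_def)
    then have "x s = y s" by (rule eq_on)
    then show ?thesis by (simp add: gx_def)
  qed
  have "(\<lambda>s. A s *v y s + f s) integrable_on {0..t0}"
    using t0 by (intro integrand_integrable_on_initial_segment[OF Ac yc fi]) auto
  then have gx_t0: "gx integrable_on {0..t0}" by (rule integrable_spike[OF _ negligible_sing below])
  have "gx integrable_on {0..T}"
  proof (cases "t0 = T")
    case False
    have beyond: "gx v = A v *v x0 + f v" if "v \<in> {t0..T} - {t0}" for v
    proof -
      have "v \<notin> S" using cSup_upper[of v S] Sb that by (auto simp: t0_def)
      then have "\<not> gx integrable_on {0..v}" using that t0 by (simp add: S_def)
      moreover have "v \<in> {0..T}" using that t0 by auto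
      then have "x v = x0 + integral {0..v} gx"
        using sx unfolding integral_solution_def gx_def[abs_def] by blast
      ultimately have "x v = x0" by (simp add: not_integrable_integral)
      then show ?thesis by (simp add: gx_def)
    qed
    have "(\<lambda>v. A v *v x0 + f v) integrable_on {t0..T}"
    proof (rule integrable_add)
      show "(\<lambda>v. A v *v x0) integrable_on {t0..T}"
        using t0 by (intro integrable_continuous_interval continuous_intros continuous_on_subset[OF Ac]) auto
      show "f integrable_on {t0..T}" using t0 integrable_on_subinterval[OF fi, of t0 T] by auto
    qed
    then have "gx integrable_on {t0..T}"
      by (rule integrable_spike[OF _ negligible_sing beyond])
    then show ?thesis using Henstock_Kurzweil_Integration.integrable_combine[OF t0 gx_t0] by blast
  qed (use gx_t0 in simp)
  then show ?thesis using eq_on[of T t] t by simp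
qed

lemma integral_solution_lincomb:
  fixes A :: "real \<Rightarrow> real^'d^'d" and f g :: "real \<Rightarrow> real^'d"
  assumes sx: "integral_solution T A f x0 x" and sy: "integral_solution T A g y0 y"
    and Ac: "continuous_on {0..T} A" and xc: "continuous_on {0..T} x" and yc: "continuous_on {0..T} y"
    and fi: "f integrable_on {0..T}" and gi: "g integrable_on {0..T}"
  shows "integral_solution T A (\<lambda>s. a *\<^sub>R f s + b *\<^sub>R g s) (a *\<^sub>R x0 + b *\<^sub>R y0)
           (\<lambda>s. a *\<^sub>R x s + b *\<^sub>R y s)"
  unfolding integral_solution_def
proof
  fix t assume t: "t \<in> {0..T}"
  have xi: "(\<lambda>s. A s *v x s + f s) integrable_on {0..t}" and yi: "(\<lambda>s. A s *v y s + g s) integrable_on {0..t}"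
    using integrand_integrable_on_initial_segment[OF Ac _ _ t] xc yc fi gi by auto
  have "a *\<^sub>R x t + b *\<^sub>R y t
      = a *\<^sub>R x0 + b *\<^sub>R y0 + (a *\<^sub>R integral {0..t} (\<lambda>s. A s *v x s + f s)
                              + b *\<^sub>R integral {0..t} (\<lambda>s. A s *v y s + g s))"
    using bspec[OF sx[unfolded integral_solution_def] t] bspec[OF sy[unfolded integral_solution_def] t]
    by (simp add: algebra_simps)
  also have "a *\<^sub>R integral {0..t} (\<lambda>s. A s *v x s + f s) + b *\<^sub>R integral {0..t} (\<lambda>s. A s *v y s + g s)
      = integral {0..t} (\<lambda>s. a *\<^sub>R (A s *v x s + f s) + b *\<^sub>R (A s *v y s + g s))"
    using integral_add[OF integrable_cmul[OF xi, of a] integrable_cmul[OF yi, of b]] by simp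
  also have "\<dots> = integral {0..t} (\<lambda>s. A s *v (a *\<^sub>R x s + b *\<^sub>R y s) + (a *\<^sub>R f s + b *\<^sub>R g s))"
    by (simp add: matrix_vector_mult_scaleR matrix_vector_right_distrib algebra_simps)
  finally show "a *\<^sub>R x t + b *\<^sub>R y t = a *\<^sub>R x0 + b *\<^sub>R y0
      + integral {0..t} (\<lambda>s. A s *v (a *\<^sub>R x s + b *\<^sub>R y s) + (a *\<^sub>R f s + b *\<^sub>R g s))" .
qed

lemma integral_solution_norm_le:
  fixes A :: "real \<Rightarrow> real^'d^'d" and f :: "real \<Rightarrow> real^'d"
  assumes sx: "integral_solution T A f x0 x" and xc: "continuous_on {0..T} x"
    and Ac: "continuous_on {0..T} A"
    and K: "K \<ge> 0" "\<And>s v. s \<in> {0..T} \<Longrightarrow> norm (A s *v v) \<le> K * norm v"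
    and fa: "f absolutely_integrable_on {0..T}" and t: "t \<in> {0..T}"
  shows "norm (x t) \<le> 2 * exp ((2*K+1)*T) * (norm x0 + integral {0..T} (\<lambda>s. norm (f s)))"
proof -
  have fi: "f integrable_on {0..T}" and nfi: "(\<lambda>s. norm (f s)) integrable_on {0..T}"
    using fa by (auto simp: absolutely_integrable_on_def)
  define c where "c = norm x0 + integral {0..T} (\<lambda>s. norm (f s))"
  have c: "c \<ge> 0" unfolding c_def using integral_nonneg[OF nfi] by simp
  have "norm (x t) \<le> 2 * c * exp ((2*K+1)*T)"
  proof (rule gronwall_exp_bound[OF _ _ K(1) c _ t])
    show "continuous_on {0..T} (\<lambda>s. norm (x s))" by (intro continuous_intros xc)
    fix s assume s: "s \<in> {0..T}"
    have sub: "{0..s} \<subseteq> {0..T}" using s by auto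
    have fis: "f integrable_on {0..s}" "(\<lambda>v. norm (f v)) integrable_on {0..s}"
      using integrable_on_subinterval[OF fi sub] integrable_on_subinterval[OF nfi sub] by simp_all
    have Axi: "(\<lambda>v. A v *v x v) integrable_on {0..s}"
      by (intro integrable_on_initial_segment[OF _ s] continuous_intros Ac xc)
    have "x s = x0 + integral {0..s} (\<lambda>v. A v *v x v + f v)"
      using sx s unfolding integral_solution_def by blast
    then have "norm (x s) = norm (x0 + (integral {0..s} (\<lambda>v. A v *v x v) + integral {0..s} f))"
      using Axi fis by (simp add: integral_add)
    also have "\<dots> \<le> norm x0 + (norm (integral {0..s} (\<lambda>v. A v *v x v)) + norm (integral {0..s} f))"
      by (meson add_left_mono norm_triangle_ineq order_trans)
    also have "\<dots> \<le> norm x0 + (integral {0..s} (\<lambda>v. K * norm (x v)) + integral {0..s} (\<lambda>v. norm (f v)))"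
    proof -
      have "norm (integral {0..s} (\<lambda>v. A v *v x v)) \<le> integral {0..s} (\<lambda>v. K * norm (x v))"
        using K(2) sub
        by (intro integral_norm_bound_integral Axi integrable_on_initial_segment[OF _ s]
            continuous_intros xc) auto
      moreover have "norm (integral {0..s} f) \<le> integral {0..s} (\<lambda>v. norm (f v))"
        by (intro integral_norm_bound_integral fis) simp
      ultimately show ?thesis by linarith
    qed
    also have "integral {0..s} (\<lambda>v. norm (f v)) \<le> integral {0..T} (\<lambda>v. norm (f v))"
      by (intro integral_subset_le sub fis nfi) simp
    finally show "norm (x s) \<le> c + K * integral {0..s} (\<lambda>s. norm (x s))"
      by (simp add: c_def integral_mult_right)
  qed simp
  then show ?thesis by (simp add: c_def algebra_simps)
qed

lemma traj_integral_solution: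
  fixes A :: "real \<Rightarrow> real^'d^'d" and r u :: "real \<Rightarrow> real^'d"
  assumes T: "T \<ge> 0" and Ac: "continuous_on {0..T} A" and rc: "continuous_on {0..T} r"
    and ui: "u integrable_on {0..T}"
  shows traj_continuous: "continuous_on {0..T} (traj T A r x0 u)"
    and traj_solves: "integral_solution T A (\<lambda>s. r s + u s) x0 (traj T A r x0 u)"
proof -
  define f where "f s = r s + u s" for s
  have fi: "f integrable_on {0..T}"
    unfolding f_def by (intro integrable_add ui integrable_continuous_interval rc)
  obtain x where xc: "continuous_on {0..T} x" and sx: "integral_solution T A f x0 x"
    using integral_solution_exists[OF T Ac fi] by blast
  define x' where "x' t = (if t \<in> {0..T} then x t else 0)" for t
  have x'c: "continuous_on {0..T} x'" by (rule continuous_on_eq[OF xc]) (simp add: x'_def)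
  have sx': "integral_solution T A f x0 x'"
    unfolding integral_solution_def
  proof
    fix t assume t: "t \<in> {0..T}"
    have "x' t = x0 + integral {0..t} (\<lambda>s. A s *v x s + f s)"
      using bspec[OF sx[unfolded integral_solution_def] t] t by (simp add: x'_def)
    also have "integral {0..t} (\<lambda>s. A s *v x s + f s) = integral {0..t} (\<lambda>s. A s *v x' s + f s)"
      by (rule integral_cong) (use t in \<open>simp add: x'_def\<close>)
    finally show "x' t = x0 + integral {0..t} (\<lambda>s. A s *v x' s + f s)" .
  qed
  have sol_iff: "(\<forall>t\<in>{0..T}. z t = x0 + integral {0..t} (\<lambda>s. A s *v z s + r s + u s))
      \<longleftrightarrow> integral_solution T A f x0 z" for z
    by (simp add: integral_solution_def f_def add.assoc)
  have "traj T A r x0 u = x'"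
    unfolding traj_def
  proof (rule the_equality)
    show "(\<forall>t\<in>{0..T}. x' t = x0 + integral {0..t} (\<lambda>s. A s *v x' s + r s + u s))
          \<and> (\<forall>t. t \<notin> {0..T} \<longrightarrow> x' t = 0)"
      using sx' sol_iff[of x'] by (simp add: x'_def)
    fix z
    assume z: "(\<forall>t\<in>{0..T}. z t = x0 + integral {0..t} (\<lambda>s. A s *v z s + r s + u s))
               \<and> (\<forall>t. t \<notin> {0..T} \<longrightarrow> z t = 0)"
    show "z = x'"
    proof
      fix t show "z t = x' t"
        using integral_solution_unique[OF T Ac fi _ sx' x'c, of z t] z sol_iff[of z]
        by (cases "t \<in> {0..T}") (auto simp: x'_def)
    qed
  qed
  then show "continuous_on {0..T} (traj T A r x0 u)"
    and "integral_solution T A (\<lambda>s. r s + u s) x0 (traj T A r x0 u)"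
    using x'c sx' by (simp_all add: f_def[abs_def])
qed

lemma traj_deviation_le:
  fixes A :: "real \<Rightarrow> real^'d^'d" and r :: "real \<Rightarrow> real^'d"
  assumes T: "T \<ge> 0" and Ac: "continuous_on {0..T} A" and rc: "continuous_on {0..T} r"
  obtains B where "B \<ge> 0"
    "\<And>x0 y0 u t. u absolutely_integrable_on {0..T} \<Longrightarrow> t \<in> {0..T} \<Longrightarrow>
       norm (traj T A r x0 u t - traj T A r y0 (\<lambda>_. 0) t)
         \<le> B * (norm (x0 - y0) + integral {0..T} (\<lambda>s. norm (u s)))"
proof -
  obtain K where K: "K \<ge> 0" "\<And>s v. s \<in> {0..T} \<Longrightarrow> norm (A s *v v) \<le> K * norm v"
    using continuous_matrix_function_bounded[OF Ac] by blast
  show ?thesis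
  proof (rule that[of "2 * exp ((2*K+1)*T)"])
    fix x0 y0 :: "real^'d" and u :: "real \<Rightarrow> real^'d" and t
    assume ua: "u absolutely_integrable_on {0..T}" and t: "t \<in> {0..T}"
    have ui: "u integrable_on {0..T}" using ua by (simp add: absolutely_integrable_on_def)
    have fi: "(\<lambda>s. r s + u s) integrable_on {0..T}" "(\<lambda>s. r s + 0) integrable_on {0..T}"
      using integrable_add[OF integrable_continuous_interval[OF rc]] integrable_continuous_interval[OF rc] ui
      by auto
    have "integral_solution T A (\<lambda>s. 1 *\<^sub>R (r s + u s) + (-1) *\<^sub>R (r s + 0)) (1 *\<^sub>R x0 + (-1) *\<^sub>R y0)
        (\<lambda>s. 1 *\<^sub>R traj T A r x0 u s + (-1) *\<^sub>R traj T A r y0 (\<lambda>_. 0) s)"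
      by (rule integral_solution_lincomb[OF traj_solves[OF T Ac rc ui] traj_solves[OF T Ac rc integrable_0]
            Ac traj_continuous[OF T Ac rc ui] traj_continuous[OF T Ac rc integrable_0] fi])
    then have "integral_solution T A u (x0 - y0) (\<lambda>s. traj T A r x0 u s - traj T A r y0 (\<lambda>_. 0) s)"
      by simp
    from integral_solution_norm_le[OF this _ Ac K ua t]
    show "norm (traj T A r x0 u t - traj T A r y0 (\<lambda>_. 0) t)
        \<le> 2 * exp ((2*K+1)*T) * (norm (x0 - y0) + integral {0..T} (\<lambda>s. norm (u s)))"
      by (simp add: continuous_intros traj_continuous[OF T Ac rc ui] traj_continuous[OF T Ac rc integrable_0])
  qed simp
qed

lemma linear_traj_free_response:
  fixes A :: "real \<Rightarrow> real^'d^'d" and r :: "real \<Rightarrow> real^'d"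
  assumes T: "T \<ge> 0" and Ac: "continuous_on {0..T} A" and rc: "continuous_on {0..T} r"
    and t: "t \<in> {0..T}"
  shows "linear (\<lambda>x0. traj T A r x0 (\<lambda>_. 0) t - traj T A r 0 (\<lambda>_. 0) t)"
proof -
  define Z where "Z x0 s = traj T A r x0 (\<lambda>_. 0) s - traj T A r 0 (\<lambda>_. 0) s" for x0 s
  have Zc: "continuous_on {0..T} (Z x0)" for x0
    unfolding Z_def by (intro continuous_intros traj_continuous[OF T Ac rc integrable_0])
  have "integral_solution T A (\<lambda>s. 1 *\<^sub>R (r s + 0) + (-1) *\<^sub>R (r s + 0)) (1 *\<^sub>R x0 + (-1) *\<^sub>R 0)
      (\<lambda>s. 1 *\<^sub>R traj T A r x0 (\<lambda>_. 0) s + (-1) *\<^sub>R traj T A r 0 (\<lambda>_. 0) s)" for x0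
    by (intro integral_solution_lincomb traj_solves traj_continuous T Ac rc integrable_0
        integrable_add integrable_continuous_interval)
  then have Zs: "integral_solution T A (\<lambda>_. 0) x0 (Z x0)" for x0
    by (simp add: Z_def[abs_def])
  have Z_lincomb: "Z (a *\<^sub>R x + b *\<^sub>R y) t = a *\<^sub>R Z x t + b *\<^sub>R Z y t" for a b x y
  proof -
    have "integral_solution T A (\<lambda>s. a *\<^sub>R 0 + b *\<^sub>R 0) (a *\<^sub>R x + b *\<^sub>R y) (\<lambda>s. a *\<^sub>R Z x s + b *\<^sub>R Z y s)"
      by (intro integral_solution_lincomb Zs Ac Zc integrable_0)
    then have "integral_solution T A (\<lambda>_. 0) (a *\<^sub>R x + b *\<^sub>R y) (\<lambda>s. a *\<^sub>R Z x s + b *\<^sub>R Z y s)"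
      by simp
    from integral_solution_unique[OF T Ac integrable_0 Zs this _ t]
    show ?thesis by (simp add: continuous_intros Zc)
  qed
  show ?thesis
    using Z_lincomb[of 1 _ 1] Z_lincomb[of _ _ 0] by (intro linearI) (simp_all add: Z_def)
qed

lemma L2_on_absolutely_integrable:
  assumes "L2_on T u"
  shows "u absolutely_integrable_on {0..T}"
proof (rule measurable_bounded_by_integrable_imp_absolutely_integrable)
  show "u \<in> borel_measurable (lebesgue_on {0..T})"
    using assms by (intro measurable_on_imp_borel_measurable_lebesgue) (auto simp: L2_on_def)
  show "(\<lambda>t. 1 + (norm (u t))\<^sup>2) integrable_on {0..T}"
    using assms by (intro integrable_add integrable_const_ivl) (auto simp: L2_on_def)
  show "norm (u t) \<le> 1 + (norm (u t))\<^sup>2" for t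
  proof -
    have "2 * norm (u t) \<le> 1 + (norm (u t))\<^sup>2" using sum_squares_bound[of 1 "norm (u t)"] by simp
    then show ?thesis using norm_ge_zero[of "u t"] by linarith
  qed
qed simp

lemma L2_on_integral_norm_squared_le:
  assumes u: "L2_on T u" and T: "T > 0"
  shows "(integral {0..T} (\<lambda>s. norm (u s)))\<^sup>2 \<le> T * integral {0..T} (\<lambda>s. (norm (u s))\<^sup>2)"
proof -
  define N where "N = integral {0..T} (\<lambda>s. norm (u s))"
  define I where "I = integral {0..T} (\<lambda>s. (norm (u s))\<^sup>2)"
  have i1: "(\<lambda>s. norm (u s)) integrable_on {0..T}"
    using L2_on_absolutely_integrable[OF u] by (simp add: absolutely_integrable_on_def)
  have i2: "(\<lambda>s. (norm (u s))\<^sup>2) integrable_on {0..T}" using u by (simp add: L2_on_def)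
  define \<delta> where "\<delta> = N / T"
  have "integral {0..T} (\<lambda>s. 2 * \<delta> * norm (u s)) \<le> integral {0..T} (\<lambda>s. \<delta>\<^sup>2 + (norm (u s))\<^sup>2)"
    using sum_squares_bound[of \<delta>]
    by (intro integral_le integrable_add integrable_const_ivl integrable_on_mult_right i1 i2) simp
  then have "2 * \<delta> * N \<le> \<delta>\<^sup>2 * T + I"
    using T i2 by (simp add: N_def I_def integral_add integrable_const_ivl mult.commute)
  then have "N\<^sup>2 / T \<le> I" using T by (simp add: \<delta>_def power2_eq_square field_simps)
  then show ?thesis using T by (simp add: N_def I_def field_simps)
qed

lemma free_output_error_le:
  fixes A :: "real \<Rightarrow> real^'d^'d" and r :: "real \<Rightarrow> real^'d"
    and C :: "real^'d^'o" and Y :: "real \<Rightarrow> real^'o"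
  assumes T: "T > 0" and Ac: "continuous_on {0..T} A" and rc: "continuous_on {0..T} r"
    and Yc: "continuous_on {0..T} Y"
  obtains \<kappa> where "\<kappa> \<ge> 0"
    "\<And>x0 u. L2_on T u \<Longrightarrow>
       integral {0..T} (\<lambda>t. (norm (Y t - C *v traj T A r x0 (\<lambda>_. 0) t))\<^sup>2)
         \<le> 2 * integral {0..T} (\<lambda>t. (norm (Y t - C *v traj T A r x0 u t))\<^sup>2)
           + \<kappa> * integral {0..T} (\<lambda>t. (norm (u t))\<^sup>2)"
proof -
  have T0: "T \<ge> 0" using T by simp
  obtain B where B: "B \<ge> 0"
    "\<And>x0 y0 u t. u absolutely_integrable_on {0..T} \<Longrightarrow> t \<in> {0..T} \<Longrightarrow>
       norm (traj T A r x0 u t - traj T A r y0 (\<lambda>_. 0) t)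
         \<le> B * (norm (x0 - y0) + integral {0..T} (\<lambda>s. norm (u s)))"
    using traj_deviation_le[OF T0 Ac rc] by blast
  define \<beta> where "\<beta> = norm C * B"
  show ?thesis
  proof (rule that[of "2 * T * \<beta>\<^sup>2 * T"])
    fix x0 :: "real^'d" and u :: "real \<Rightarrow> real^'d"
    assume u: "L2_on T u"
    have ua: "u absolutely_integrable_on {0..T}" by (rule L2_on_absolutely_integrable[OF u])
    then have ui: "u integrable_on {0..T}" by (simp add: absolutely_integrable_on_def)
    define Xu where "Xu = traj T A r x0 u"
    define X0 where "X0 = traj T A r x0 (\<lambda>_. 0)"
    define N where "N = integral {0..T} (\<lambda>s. norm (u s))"
    define a where "a t = (norm (Y t - C *v Xu t))\<^sup>2" for t
    have ai: "a integrable_on {0..T}"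
      unfolding a_def Xu_def
      by (intro integrable_continuous_interval continuous_intros Yc traj_continuous[OF T0 Ac rc ui])
    have pointwise: "(norm (Y t - C *v X0 t))\<^sup>2 \<le> 2 * a t + 2 * (\<beta> * N)\<^sup>2" if t: "t \<in> {0..T}" for t
    proof -
      have "norm (C *v (Xu t - X0 t)) \<le> norm C * (B * N)"
        using B(2)[OF ua t, of x0 x0] norm_matrix_vector_mult_le[of C "Xu t - X0 t"]
        by (simp add: Xu_def X0_def N_def) (meson mult_left_mono norm_ge_zero order_trans)
      then have "(norm (C *v (Xu t - X0 t)))\<^sup>2 \<le> (\<beta> * N)\<^sup>2"
        by (simp add: \<beta>_def power_mono mult.assoc)
      moreover have "(norm (Y t - C *v X0 t))\<^sup>2 \<le> 2 * a t + 2 * (norm (C *v (Xu t - X0 t)))\<^sup>2"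
      proof -
        have "Y t - C *v X0 t = (Y t - C *v Xu t) + C *v (Xu t - X0 t)"
          by (simp add: matrix_vector_mult_diff_distrib)
        then show ?thesis unfolding a_def by (metis norm_add_squared_le)
      qed
      ultimately show ?thesis by linarith
    qed
    have "integral {0..T} (\<lambda>t. (norm (Y t - C *v X0 t))\<^sup>2) \<le> integral {0..T} (\<lambda>t. 2 * a t + 2 * (\<beta> * N)\<^sup>2)"
    proof (rule integral_le)
      show "(\<lambda>t. (norm (Y t - C *v X0 t))\<^sup>2) integrable_on {0..T}"
        unfolding X0_def
        by (intro integrable_continuous_interval continuous_intros Yc traj_continuous[OF T0 Ac rc integrable_0])
      show "(\<lambda>t. 2 * a t + 2 * (\<beta> * N)\<^sup>2) integrable_on {0..T}"
        by (intro integrable_add integrable_on_mult_right ai integrable_const_ivl)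
    qed (use pointwise in auto)
    also have "\<dots> = 2 * integral {0..T} a + 2 * T * \<beta>\<^sup>2 * N\<^sup>2"
      using ai T0
      by (simp add: integral_add integrable_on_mult_right integrable_const_ivl power_mult_distrib)
    also have "\<dots> \<le> 2 * integral {0..T} a + 2 * T * \<beta>\<^sup>2 * T * integral {0..T} (\<lambda>t. (norm (u t))\<^sup>2)"
      using L2_on_integral_norm_squared_le[OF u T] T0
      by (simp add: N_def mult.assoc mult_left_mono)
    finally show "integral {0..T} (\<lambda>t. (norm (Y t - C *v traj T A r x0 (\<lambda>_. 0) t))\<^sup>2)
         \<le> 2 * integral {0..T} (\<lambda>t. (norm (Y t - C *v traj T A r x0 u t))\<^sup>2)
           + 2 * T * \<beta>\<^sup>2 * T * integral {0..T} (\<lambda>t. (norm (u t))\<^sup>2)"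
      by (simp add: X0_def Xu_def a_def[abs_def])
  qed (use T0 in simp)
qed

lemma subsequence_error_tendsto_0:
  fixes s :: "nat \<Rightarrow> 'a::real_normed_vector"
  assumes "strict_mono r" "s \<longlonglongrightarrow> v"
  shows "(\<lambda>n. a * inverse (real (Suc (r n))) + b * (norm (s n - v))\<^sup>2) \<longlonglongrightarrow> 0"
proof -
  have "(\<lambda>n. inverse (real (Suc (r n)))) \<longlonglongrightarrow> 0"
    using LIMSEQ_subseq_LIMSEQ[OF LIMSEQ_Suc[OF lim_inverse_n] assms(1)] by (simp add: o_def)
  moreover have "(\<lambda>n. norm (s n - v)) \<longlonglongrightarrow> 0"
    using tendsto_norm_zero[OF LIM_zero[OF assms(2)]] .
  ultimately have "(\<lambda>n. a * inverse (real (Suc (r n))) + b * (norm (s n - v))\<^sup>2) \<longlonglongrightarrow> a * 0 + b * 0\<^sup>2"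
    by (intro tendsto_intros)
  then show ?thesis by simp
qed

lemma quadratic_coercive_on_kernel_complement:
  fixes g :: "'a::euclidean_space \<Rightarrow> real"
  assumes nonneg: "\<And>x. g x \<ge> 0"
    and scale: "\<And>c x. g (c *\<^sub>R x) = c\<^sup>2 * g x"
    and add: "\<And>x y. g (x + y) \<le> 2 * g x + 2 * g y"
    and bound: "\<And>x. g x \<le> \<kappa> * (norm x)\<^sup>2"
  obtains \<mu> where "\<mu> > 0" "\<And>x. (\<And>w. g w = 0 \<Longrightarrow> x \<bullet> w = 0) \<Longrightarrow> \<mu> * (norm x)\<^sup>2 \<le> g x"
proof -
  define M where "M x \<longleftrightarrow> (\<forall>w. g w = 0 \<longrightarrow> x \<bullet> w = 0)" for x
  have "\<exists>\<mu>>0. \<forall>x. M x \<longrightarrow> \<mu> * (norm x)\<^sup>2 \<le> g x"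
  proof (rule ccontr)
    assume not_coercive: "\<not> (\<exists>\<mu>>0. \<forall>x. M x \<longrightarrow> \<mu> * (norm x)\<^sup>2 \<le> g x)"
    have "\<exists>v. v \<in> sphere 0 1 \<and> M v \<and> g v < inverse (real (Suc n))" for n
    proof -
      obtain x where x: "M x" "g x < inverse (real (Suc n)) * (norm x)\<^sup>2"
        using not_coercive by (meson not_le positive_imp_inverse_positive of_nat_0_less_iff zero_less_Suc)
      have x0: "x \<noteq> 0" using x(2) nonneg[of x] by auto
      define v where "v = inverse (norm x) *\<^sub>R x"
      have "g v = (inverse (norm x))\<^sup>2 * g x" by (simp add: v_def scale)
      also have "\<dots> < (inverse (norm x))\<^sup>2 * (inverse (real (Suc n)) * (norm x)\<^sup>2)"
        using x(2) x0 by (intro mult_strict_left_mono) auto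
      also have "\<dots> = inverse (real (Suc n))" using x0 by (simp add: field_simps)
      finally show ?thesis using x(1) x0 by (intro exI[of _ v]) (simp add: v_def M_def)
    qed
    then obtain vs where vs: "\<And>n. vs n \<in> sphere 0 1" "\<And>n. M (vs n)" "\<And>n. g (vs n) < inverse (real (Suc n))"
      by metis
    obtain v r where v: "v \<in> sphere 0 1" and r: "strict_mono r" and lim: "(vs \<circ> r) \<longlonglongrightarrow> v"
      using compact_imp_seq_compact[OF compact_sphere[of "0::'a" 1]] vs(1) unfolding seq_compact_def by blast
    have "M v"
      unfolding M_def
    proof (intro allI impI)
      fix w assume "g w = 0"
      then have "(\<lambda>n. (vs \<circ> r) n \<bullet> w) = (\<lambda>n. 0)" using vs(2) by (simp add: M_def)
      moreover have "(\<lambda>n. (vs \<circ> r) n \<bullet> w) \<longlonglongrightarrow> v \<bullet> w" by (intro tendsto_intros lim)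
      ultimately show "v \<bullet> w = 0" using LIMSEQ_unique tendsto_const by metis
    qed
    note upper = subsequence_error_tendsto_0[OF r lim[unfolded comp_def], of 2 "2 * \<kappa>"]
    have "g v \<le> 0"
    proof (rule LIMSEQ_le_const[OF upper], intro exI allI impI)
      fix n
      have "g v \<le> 2 * g (vs (r n)) + 2 * g (v - vs (r n))" using add[of "vs (r n)" "v - vs (r n)"] by simp
      also have "\<dots> \<le> 2 * inverse (real (Suc (r n))) + 2 * \<kappa> * (norm (vs (r n) - v))\<^sup>2"
        using vs(3)[of "r n"] bound[of "v - vs (r n)"] by (simp add: norm_minus_commute)
      finally show "g v \<le> 2 * inverse (real (Suc (r n))) + 2 * \<kappa> * (norm (vs (r n) - v))\<^sup>2" .
    qed
    then have "v \<bullet> v = 0" using \<open>M v\<close> nonneg[of v] by (simp add: M_def)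
    then show False using v by simp
  qed
  then show ?thesis using that by (auto simp: M_def)
qed

text \<open>The hypotheses are those of \<open>g x = \<parallel>H x\<parallel>\<^sup>2\<close> and \<open>q x = \<parallel>w - H x\<parallel>\<^sup>2\<close> for a linear \<open>H\<close>
  into a normed space; \<open>q_le\<close> and \<open>g_le\<close> are the squared triangle inequalities.\<close>
lemma quadratic_distance_attains_zero:
  fixes g q :: "'a::euclidean_space \<Rightarrow> real"
  assumes g_nonneg: "\<And>x. g x \<ge> 0"
    and g_scale: "\<And>c x. g (c *\<^sub>R x) = c\<^sup>2 * g x"
    and g_add: "\<And>x y. g (x + y) \<le> 2 * g x + 2 * g y"
    and g_bound: "\<And>x. g x \<le> \<kappa> * (norm x)\<^sup>2"
    and q_nonneg: "\<And>x. q x \<ge> 0"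
    and q_le: "\<And>x z. q x \<le> 2 * q z + 2 * g (z - x)"
    and g_le: "\<And>x z. g (z - x) \<le> 2 * q z + 2 * q x"
    and approx: "\<And>\<epsilon>. \<epsilon> > 0 \<Longrightarrow> \<exists>x. q x < \<epsilon>"
  obtains a where "q a = 0"
proof -
  define N where "N = {w. g w = 0}"
  have "subspace N"
    unfolding subspace_def N_def
  proof (intro conjI ballI allI)
    show "0 \<in> {w. g w = 0}" using g_scale[of 0 0] by simp
    show "x + y \<in> {w. g w = 0}" if "x \<in> {w. g w = 0}" "y \<in> {w. g w = 0}" for x y
      using g_add[of x y] g_nonneg[of "x + y"] that by simp
    show "c *\<^sub>R x \<in> {w. g w = 0}" if "x \<in> {w. g w = 0}" for c x
      using g_scale[of c x] that by simp
  qed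
  then have span_N: "span N = N" by (simp add: span_eq_iff)
  obtain \<mu> where \<mu>: "\<mu> > 0" "\<And>x. (\<And>w. g w = 0 \<Longrightarrow> x \<bullet> w = 0) \<Longrightarrow> \<mu> * (norm x)\<^sup>2 \<le> g x"
    using quadratic_coercive_on_kernel_complement[OF g_nonneg g_scale g_add g_bound] by blast
  have "\<exists>z. (\<forall>w. g w = 0 \<longrightarrow> z \<bullet> w = 0) \<and> q z < 2 * inverse (real (Suc n))" for n
  proof -
    obtain x where x: "q x < inverse (real (Suc n))" using approx[of "inverse (real (Suc n))"] by auto
    obtain y z where yz: "y \<in> span N" "\<And>w. w \<in> span N \<Longrightarrow> orthogonal z w" "x = y + z"
      by (rule orthogonal_subspace_decomp_exists[of N x]) blast
    have "q z \<le> 2 * q x + 2 * g (x - z)" by (rule q_le)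
    also have "g (x - z) = 0" using yz(1,3) unfolding span_N by (simp add: N_def)
    finally have "q z < 2 * inverse (real (Suc n))" using x by simp
    then show ?thesis using yz(2) unfolding span_N by (auto simp: N_def orthogonal_def)
  qed
  then obtain zs where zs_perp: "\<And>n w. g w = 0 \<Longrightarrow> zs n \<bullet> w = 0"
    and zs_small: "\<And>n. q (zs n) < 2 * inverse (real (Suc n))"
    by metis
  define R where "R = sqrt ((4 + 2 * q 0) / \<mu>)"
  have "zs n \<in> cball 0 R" for n
  proof -
    have "\<mu> * (norm (zs n))\<^sup>2 \<le> g (zs n - 0)" using \<mu>(2)[OF zs_perp] by simp
    also have "\<dots> \<le> 2 * q (zs n) + 2 * q 0" by (rule g_le)
    also have "\<dots> \<le> 4 + 2 * q 0"
      using zs_small[of n] inverse_le_1_iff[of "real (Suc n)"] by simp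
    finally have "(norm (zs n))\<^sup>2 \<le> (4 + 2 * q 0) / \<mu>"
      using \<mu>(1) by (simp add: pos_le_divide_eq mult.commute)
    then show ?thesis by (simp add: R_def real_le_rsqrt)
  qed
  moreover have "seq_compact (cball (0::'a) R)" by (rule compact_imp_seq_compact[OF compact_cball])
  ultimately obtain a r where r: "strict_mono r" and lim: "(zs \<circ> r) \<longlonglongrightarrow> a"
    unfolding seq_compact_def by blast
  have "q a \<le> 0"
  proof (rule LIMSEQ_le_const[OF subsequence_error_tendsto_0[OF r lim[unfolded comp_def], of 4 "2 * \<kappa>"]],
      intro exI allI impI)
    fix n
    have "q a \<le> 2 * q (zs (r n)) + 2 * g (zs (r n) - a)" by (rule q_le)
    also have "\<dots> \<le> 4 * inverse (real (Suc (r n))) + 2 * \<kappa> * (norm (zs (r n) - a))\<^sup>2"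
      using zs_small[of "r n"] g_bound[of "zs (r n) - a"] by simp
    finally show "q a \<le> 4 * inverse (real (Suc (r n))) + 2 * \<kappa> * (norm (zs (r n) - a))\<^sup>2" .
  qed
  then show ?thesis using q_nonneg[of a] that by simp
qed

lemma L2_approximable_imp_exact:
  fixes H :: "'a::euclidean_space \<Rightarrow> real \<Rightarrow> 'b::real_normed_vector" and w :: "real \<Rightarrow> 'b"
  assumes T: "T > 0"
    and H_linear: "\<And>t. t \<in> {0..T} \<Longrightarrow> linear (\<lambda>x. H x t)"
    and H_cont: "\<And>x. continuous_on {0..T} (H x)"
    and H_bound: "\<And>x t. t \<in> {0..T} \<Longrightarrow> norm (H x t) \<le> B * norm x"
    and w_cont: "continuous_on {0..T} w"
    and approx: "\<And>\<epsilon>. \<epsilon> > 0 \<Longrightarrow> \<exists>x. integral {0..T} (\<lambda>t. (norm (w t - H x t))\<^sup>2) < \<epsilon>"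
  obtains a where "\<And>t. t \<in> {0..T} \<Longrightarrow> w t = H a t"
proof -
  define g where "g x = integral {0..T} (\<lambda>t. (norm (H x t))\<^sup>2)" for x
  define q where "q x = integral {0..T} (\<lambda>t. (norm (w t - H x t))\<^sup>2)" for x
  have H_diff: "H (z - x) t = H z t - H x t" if "t \<in> {0..T}" for x z t
    using linear_diff[OF H_linear[OF that]] by simp
  have H_add: "H (x + y) t = H x t + H y t" if "t \<in> {0..T}" for x y t
    using linear_add[OF H_linear[OF that]] by simp
  have H_scale: "H (c *\<^sub>R x) t = c *\<^sub>R H x t" if "t \<in> {0..T}" for c x t
    using linear_scale[OF H_linear[OF that]] by simp
  have cont: "continuous_on {0..T} (\<lambda>t. w t - H x t)" for x by (intro continuous_intros w_cont H_cont)
  obtain a where "q a = 0"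
  proof (rule quadratic_distance_attains_zero[of g "T * B\<^sup>2" q])
    show "g x \<ge> 0" for x
      unfolding g_def by (intro integral_nonneg integrable_continuous_interval continuous_intros H_cont) simp
    show "q x \<ge> 0" for x
      unfolding q_def by (intro integral_nonneg integrable_continuous_interval continuous_intros cont) simp
    show "g (c *\<^sub>R x) = c\<^sup>2 * g x" for c x
    proof -
      have "g (c *\<^sub>R x) = integral {0..T} (\<lambda>t. c\<^sup>2 * (norm (H x t))\<^sup>2)"
        unfolding g_def by (rule integral_cong) (simp add: H_scale power_mult_distrib)
      then show ?thesis by (simp add: g_def)
    qed
    show "g (x + y) \<le> 2 * g x + 2 * g y" for x y
    proof -
      have "g (x + y) = integral {0..T} (\<lambda>t. (norm (H x t + H y t))\<^sup>2)"
        unfolding g_def by (rule integral_cong) (simp add: H_add)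
      then show ?thesis unfolding g_def using integral_norm_add_squared_le[OF H_cont H_cont] by simp
    qed
    show "g x \<le> T * B\<^sup>2 * (norm x)\<^sup>2" for x
    proof -
      have "g x \<le> integral {0..T} (\<lambda>t. (B * norm x)\<^sup>2)"
        unfolding g_def using H_bound
        by (intro integral_le integrable_continuous_interval continuous_intros H_cont)
           (auto intro: power_mono)
      then show ?thesis using T by (simp add: power_mult_distrib mult_ac)
    qed
    show "q x \<le> 2 * q z + 2 * g (z - x)" for x z
    proof -
      have "q x = integral {0..T} (\<lambda>t. (norm ((w t - H z t) + H (z - x) t))\<^sup>2)"
        unfolding q_def by (rule integral_cong) (simp add: H_diff)
      also have "\<dots> \<le> 2 * q z + 2 * g (z - x)"
        unfolding q_def g_def by (rule integral_norm_add_squared_le[OF cont H_cont])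
      finally show ?thesis .
    qed
    show "g (z - x) \<le> 2 * q z + 2 * q x" for x z
    proof -
      have "g (z - x) = integral {0..T} (\<lambda>t. (norm ((H z t - w t) + (w t - H x t)))\<^sup>2)"
        unfolding g_def by (rule integral_cong) (simp add: H_diff)
      also have "\<dots> \<le> 2 * integral {0..T} (\<lambda>t. (norm (H z t - w t))\<^sup>2) + 2 * q x"
        unfolding q_def by (intro integral_norm_add_squared_le cont continuous_intros H_cont w_cont)
      also have "\<dots> = 2 * q z + 2 * q x" by (simp add: q_def norm_minus_commute)
      finally show ?thesis .
    qed
  qed (unfold q_def, rule approx)
  then show ?thesis
    using continuous_square_integral_eq_0[OF T cont] that by (simp add: q_def)
qed

lemma L2_on_zero: "L2_on T (\<lambda>_. 0)"
  unfolding L2_on_def using integrable_0 by simp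

lemma cost_inf_zero_imp_free_output_approx:
  fixes A :: "real \<Rightarrow> real^'d^'d" and r :: "real \<Rightarrow> real^'d"
    and C :: "real^'d^'o" and Y :: "real \<Rightarrow> real^'o"
  assumes T: "T > 0" and Ac: "continuous_on {0..T} A" and rc: "continuous_on {0..T} r"
    and Yc: "continuous_on {0..T} Y" and lam: "lam > 0"
    and inf0: "Inf {integral {0..T} (\<lambda>t. (norm (Y t - C *v traj T A r x0 u t))\<^sup>2 + lam * (norm (u t))\<^sup>2)
                   | x0 u. L2_on T u} = 0"
    and eps: "\<epsilon> > 0"
  shows "\<exists>x0. integral {0..T} (\<lambda>t. (norm (Y t - C *v traj T A r x0 (\<lambda>_. 0) t))\<^sup>2) < \<epsilon>"
proof -
  obtain \<kappa> where \<kappa>: "\<kappa> \<ge> 0"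
    "\<And>x0 u. L2_on T u \<Longrightarrow>
       integral {0..T} (\<lambda>t. (norm (Y t - C *v traj T A r x0 (\<lambda>_. 0) t))\<^sup>2)
         \<le> 2 * integral {0..T} (\<lambda>t. (norm (Y t - C *v traj T A r x0 u t))\<^sup>2)
           + \<kappa> * integral {0..T} (\<lambda>t. (norm (u t))\<^sup>2)"
    using free_output_error_le[OF T Ac rc Yc] by blast
  define M where "M = max 2 (\<kappa> / lam)"
  have M: "M \<ge> 2" "\<kappa> \<le> M * lam"
  proof -
    show "M \<ge> 2" by (simp add: M_def)
    have "\<kappa> = (\<kappa> / lam) * lam" using lam by simp
    also have "\<dots> \<le> M * lam" using lam by (intro mult_right_mono) (auto simp: M_def)
    finally show "\<kappa> \<le> M * lam" .
  qed
  let ?V = "{integral {0..T} (\<lambda>t. (norm (Y t - C *v traj T A r x0 u t))\<^sup>2 + lam * (norm (u t))\<^sup>2)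
             | x0 u. L2_on T u}"
  have "?V \<noteq> {}" using L2_on_zero by blast
  moreover have "Inf ?V < \<epsilon> / M" using inf0 eps M(1) by simp
  ultimately obtain x0 u where u: "L2_on T u"
    and small: "integral {0..T} (\<lambda>t. (norm (Y t - C *v traj T A r x0 u t))\<^sup>2 + lam * (norm (u t))\<^sup>2) < \<epsilon> / M"
    using cInf_lessD[of ?V] by blast
  define a where "a = integral {0..T} (\<lambda>t. (norm (Y t - C *v traj T A r x0 u t))\<^sup>2)"
  define b where "b = integral {0..T} (\<lambda>t. (norm (u t))\<^sup>2)"
  have ui: "u integrable_on {0..T}"
    using L2_on_absolutely_integrable[OF u] by (simp add: absolutely_integrable_on_def)
  have ai: "(\<lambda>t. (norm (Y t - C *v traj T A r x0 u t))\<^sup>2) integrable_on {0..T}"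
    using T by (intro integrable_continuous_interval continuous_intros Yc traj_continuous[OF _ Ac rc ui]) simp
  have bi: "(\<lambda>t. (norm (u t))\<^sup>2) integrable_on {0..T}" using u by (simp add: L2_on_def)
  have "a \<ge> 0" "b \<ge> 0" unfolding a_def b_def using ai bi by (simp_all add: integral_nonneg)
  have "integral {0..T} (\<lambda>t. (norm (Y t - C *v traj T A r x0 u t))\<^sup>2 + lam * (norm (u t))\<^sup>2) = a + lam * b"
    using integral_add[OF ai integrable_on_mult_right[OF bi, of lam]] by (simp add: a_def b_def)
  then have "a + lam * b < \<epsilon> / M" using small by simp
  have "integral {0..T} (\<lambda>t. (norm (Y t - C *v traj T A r x0 (\<lambda>_. 0) t))\<^sup>2) \<le> 2 * a + \<kappa> * b"
    using \<kappa>(2)[OF u] by (simp add: a_def b_def)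
  also have "\<dots> \<le> M * a + (M * lam) * b"
    using mult_right_mono[OF M(1) \<open>a \<ge> 0\<close>] mult_right_mono[OF M(2) \<open>b \<ge> 0\<close>] by linarith
  also have "\<dots> < \<epsilon>"
    using \<open>a + lam * b < \<epsilon> / M\<close> M(1) by (simp add: pos_less_divide_eq algebra_simps)
  finally show ?thesis by blast
qed

lemma free_output_approximable_imp_exact:
  fixes A :: "real \<Rightarrow> real^'d^'d" and r :: "real \<Rightarrow> real^'d"
    and C :: "real^'d^'o" and Y :: "real \<Rightarrow> real^'o"
  assumes T: "T > 0" and Ac: "continuous_on {0..T} A" and rc: "continuous_on {0..T} r"
    and Yc: "continuous_on {0..T} Y"
    and approx: "\<And>\<epsilon>. \<epsilon> > 0 \<Longrightarrow>
        \<exists>x0. integral {0..T} (\<lambda>t. (norm (Y t - C *v traj T A r x0 (\<lambda>_. 0) t))\<^sup>2) < \<epsilon>"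
  obtains a where "\<And>t. t \<in> {0..T} \<Longrightarrow> Y t = C *v traj T A r a (\<lambda>_. 0) t"
proof -
  have T0: "T \<ge> 0" using T by simp
  define X where "X x0 = traj T A r x0 (\<lambda>_. 0)" for x0
  define H where "H x0 t = C *v (X x0 t - X 0 t)" for x0 t
  define w where "w t = Y t - C *v X 0 t" for t
  have X_cont: "continuous_on {0..T} (X x0)" for x0
    unfolding X_def by (rule traj_continuous[OF T0 Ac rc integrable_0])
  obtain B where B: "B \<ge> 0" "\<And>x0 y0 u t. u absolutely_integrable_on {0..T} \<Longrightarrow> t \<in> {0..T} \<Longrightarrow>
       norm (traj T A r x0 u t - traj T A r y0 (\<lambda>_. 0) t)
         \<le> B * (norm (x0 - y0) + integral {0..T} (\<lambda>s. norm (u s)))"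
    using traj_deviation_le[OF T0 Ac rc] by blast
  have residual: "Y t - C *v X x0 t = w t - H x0 t" for x0 t
    by (simp add: w_def H_def matrix_vector_mult_diff_distrib)
  obtain a where a: "\<And>t. t \<in> {0..T} \<Longrightarrow> w t = H a t"
  proof (rule L2_approximable_imp_exact[OF T, of H "norm C * B" w])
    show "linear (\<lambda>x0. H x0 t)" if "t \<in> {0..T}" for t
      unfolding H_def X_def
      using linear_compose[OF linear_traj_free_response[OF T0 Ac rc that] matrix_vector_mul_linear[of C]]
      by (simp add: o_def)
    show "continuous_on {0..T} (H x0)" for x0
      unfolding H_def by (intro continuous_intros X_cont)
    show "norm (H x0 t) \<le> norm C * B * norm x0" if "t \<in> {0..T}" for x0 t
    proof -
      have "norm (X x0 t - X 0 t) \<le> B * norm x0"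
        using B(2)[OF absolutely_integrable_zero that, of x0 0] by (simp add: X_def)
      then have "norm C * norm (X x0 t - X 0 t) \<le> norm C * (B * norm x0)"
        by (rule mult_left_mono) simp
      then show ?thesis
        using norm_matrix_vector_mult_le[of C "X x0 t - X 0 t"] by (simp add: H_def mult.assoc)
    qed
    show "continuous_on {0..T} w" unfolding w_def by (intro continuous_intros Yc X_cont)
    show "\<exists>x0. integral {0..T} (\<lambda>t. (norm (w t - H x0 t))\<^sup>2) < \<epsilon>" if "\<epsilon> > 0" for \<epsilon>
      using approx[OF that] by (simp add: residual[symmetric] X_def)
  qed blast
  show ?thesis
  proof (rule that)
    fix t assume "t \<in> {0..T}"
    then have "Y t - C *v X a t = 0" using a residual[of t a] by simp
    then show "Y t = C *v traj T A r a (\<lambda>_. 0) t" by (simp add: X_def)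
  qed
qed

lemma S_cost_zero_weight:
  "S_cost T C 0 A r Y \<theta> lam = Inf {integral {0..T} (\<lambda>t. (norm (Y t - C *v traj T (A \<theta>) (r \<theta>) x0 u t))\<^sup>2
      + lam * (norm (u t))\<^sup>2) | x0 u. L2_on T u}"
proof -
  have "(0::real^'d^'d) *v x0 = 0" for x0 by (simp add: vec_eq_iff matrix_vector_mult_def)
  then show ?thesis unfolding S_cost_def by simp
qed

lemma cost_inf_eq_0_if_exact:
  fixes A :: "real \<Rightarrow> real^'d^'d" and r :: "real \<Rightarrow> real^'d"
    and C :: "real^'d^'o" and Y :: "real \<Rightarrow> real^'o"
  assumes lam: "lam \<ge> 0" and exact: "\<And>t. t \<in> {0..T} \<Longrightarrow> Y t = C *v traj T A r a (\<lambda>_. 0) t"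
  shows "Inf {integral {0..T} (\<lambda>t. (norm (Y t - C *v traj T A r x0 u t))\<^sup>2 + lam * (norm (u t))\<^sup>2)
             | x0 u. L2_on T u} = 0"
proof (rule cInf_eq_minimum)
  have "integral {0..T} (\<lambda>t. (norm (Y t - C *v traj T A r a (\<lambda>_. 0) t))\<^sup>2 + lam * (norm ((\<lambda>_. 0::real^'d) t))\<^sup>2) = 0"
  proof -
    have "integral {0..T} (\<lambda>t. (norm (Y t - C *v traj T A r a (\<lambda>_. 0) t))\<^sup>2 + lam * (norm ((\<lambda>_. 0::real^'d) t))\<^sup>2)
        = integral {0..T} (\<lambda>t. 0)"
      by (rule integral_cong) (simp add: exact)
    then show ?thesis by simp
  qed
  then show "0 \<in> {integral {0..T} (\<lambda>t. (norm (Y t - C *v traj T A r x0 u t))\<^sup>2 + lam * (norm (u t))\<^sup>2)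
             | x0 u. L2_on T u}"
    using L2_on_zero[of T] by (intro CollectI exI[of _ a] exI[of _ "\<lambda>_. 0"]) simp
  fix v assume "v \<in> {integral {0..T} (\<lambda>t. (norm (Y t - C *v traj T A r x0 u t))\<^sup>2 + lam * (norm (u t))\<^sup>2)
             | x0 u. L2_on T u}"
  then obtain f where f: "v = integral {0..T} f" "\<And>t. f t \<ge> 0" using lam by fastforce
  show "0 \<le> v"
    using f integral_nonneg[of f "{0..T}"] not_integrable_integral[of f "{0..T}"]
    by (cases "f integrable_on {0..T}") auto
qed

theorem mainTheorem5:
  fixes T :: real
    and C :: "real^'d^'o"
    and Q :: "real^'d^'d"
    and \<Theta> :: "(real^'p) set"
    and A :: "real^'p \<Rightarrow> real \<Rightarrow> real^'d^'d"
    and r :: "real^'p \<Rightarrow> real \<Rightarrow> real^'d"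
    and \<theta>s :: "real^'p"
    and x0s :: "real^'d"
    and lam :: real
    and \<theta> :: "real^'p"
  assumes T_pos: "T > 0"
    and A_cont: "\<And>\<theta>. \<theta> \<in> \<Theta> \<Longrightarrow> continuous_on {0..T} (A \<theta>)"
    and r_cont: "\<And>\<theta>. \<theta> \<in> \<Theta> \<Longrightarrow> continuous_on {0..T} (r \<theta>)"
    and C1: "compact \<Theta>" "\<theta>s \<in> interior \<Theta>"
    and C2a: "Q = 0" "\<And>\<theta>. \<theta> \<in> \<Theta> \<Longrightarrow> invertible (obs_gram T C (A \<theta>))"
    and C2b: "\<And>\<theta>' x0. \<theta>' \<in> \<Theta> \<Longrightarrow>
        (\<forall>t\<in>{0..T}. C *v traj T (A \<theta>') (r \<theta>') x0 (\<lambda>_. 0) t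
                   = C *v traj T (A \<theta>s) (r \<theta>s) x0s (\<lambda>_. 0) t)
        \<Longrightarrow> (\<theta>', x0) = (\<theta>s, x0s)"
    and lam_pos: "lam > 0"
    and theta_in: "\<theta> \<in> \<Theta>"
  shows "S_cost T C Q A r (\<lambda>t. C *v traj T (A \<theta>s) (r \<theta>s) x0s (\<lambda>_. 0) t) \<theta> lam = 0
         \<longleftrightarrow> \<theta> = \<theta>s"
proof -
  have \<theta>s_in: "\<theta>s \<in> \<Theta>" using C1(2) interior_subset by blast
  define Y where "Y = (\<lambda>t. C *v traj T (A \<theta>s) (r \<theta>s) x0s (\<lambda>_. 0) t)"
  have Yc: "continuous_on {0..T} Y"
    unfolding Y_def using T_pos
    by (intro continuous_intros traj_continuous[OF _ A_cont[OF \<theta>s_in] r_cont[OF \<theta>s_in] integrable_0]) simp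
  note A\<theta> = A_cont[OF theta_in] and r\<theta> = r_cont[OF theta_in]
  have "S_cost T C Q A r Y \<theta> lam = 0 \<longleftrightarrow> \<theta> = \<theta>s"
    unfolding C2a(1) S_cost_zero_weight
  proof
    assume "Inf {integral {0..T} (\<lambda>t. (norm (Y t - C *v traj T (A \<theta>) (r \<theta>) x0 u t))\<^sup>2
        + lam * (norm (u t))\<^sup>2) | x0 u. L2_on T u} = 0"
    from cost_inf_zero_imp_free_output_approx[OF T_pos A\<theta> r\<theta> Yc lam_pos this]
    obtain a where "\<And>t. t \<in> {0..T} \<Longrightarrow> Y t = C *v traj T (A \<theta>) (r \<theta>) a (\<lambda>_. 0) t"
      using free_output_approximable_imp_exact[OF T_pos A\<theta> r\<theta> Yc] by blast
    then show "\<theta> = \<theta>s" using C2b[OF theta_in, of a] by (simp add: Y_def)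
  qed (use lam_pos in \<open>auto intro!: cost_inf_eq_0_if_exact[of _ _ _ _ _ _ x0s] simp: Y_def\<close>)
  then show ?thesis unfolding Y_def .
qed

end
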